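(* Let $\vec{\mathcal U}\in\Upsilon$ and $\theta\in L$. Then $\theta\in Bel(\preceq_{\vec{\mathcal U}})$ if and only if $\top\mid\!\sim_{\vec{\mathcal U}}\theta$.
   Context: $L$ is a propositional language built from a finite set of propositional variables with the connectives $\neg,\wedge,\vee,\rightarrow,\top,\bot$; $W$ is the finite set of propositional worlds. For $\theta\in L$, $S_\theta=\{w\in W\mid w\models\theta\}$. Sequences: consider finite sequences $\vec{\mathcal U}=(\mathcal U_0,\ldots,\mathcal U_k)$ ($k\ge 0$) of mutually disjoint subsets of $W$ (components may be empty, possibly repeatedly). $\mathrm{rank}^{\vec{\mathcal U}}(\theta)$ is the least $i$ with $\mathcal U_i\cap S_\theta\neq\emptyset$, and $\infty$ if none (with $i<\infty$ for every integer $i$). $\theta\mid\!\sim_{\vec{\mathcal U}}\phi$ iff either $\mathrm{rank}^{\vec{\mathcal U}}(\theta)<\mathrm{rank}^{\vec{\mathcal U}}(\theta\wedge\neg\phi)$ or $\mathrm{rank}^{\vec{\mathcal U}}(\theta)=\infty$. $\vec{\mathcal U}$ is full iff $\bigcup_i\mathcal U_i=W$, empty iff $\bigcup_i\mathcal U_i=\emptyset$; $\Upsilon$ is the set of such sequences which are full or empty. For $\vec{\mathcal U}\in\Upsilon$, $\theta\preceq_{\vec{\mathcal U}}\phi$ iff (not $\neg\theta\vee\neg\phi\mid\!\sim_{\vec{\mathcal U}}\theta$) or $\neg\phi\mid\!\sim_{\vec{\mathcal U}}\bot$; its strict part $\prec_{\vec{\mathcal U}}$ is given by $\theta\prec_{\vec{\mathcal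 U}}\phi$ iff $\theta\preceq_{\vec{\mathcal U}}\phi$ and not $\phi\preceq_{\vec{\mathcal U}}\theta$. For a relation $\preceq$ on $L$ with strict part $\prec$, its belief set is $Bel(\preceq)=\{\theta\mid\bot\prec\theta\}$ if $\bot\prec\theta$ for some $\theta\in L$, and $Bel(\preceq)=L$ otherwise. *)

theory Defs
  imports Main "HOL-Library.Extended_Nat"
begin

datatype 'v form = Var 'v | Neg "'v form" | Conj "'v form" "'v form"
  | Disj "'v form" "'v form" | Imp "'v form" "'v form" | Top | Bot

type_synonym 'v world = "'v \<Rightarrow> bool"

fun models :: "'v world \<Rightarrow> 'v form \<Rightarrow> bool" where
  "models w (Var p) = w p"
| "models w (Neg a) = (\<not> models w a)"
| "models w (Conj a b) = (models w a \<and> models w b)"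
| "models w (Disj a b) = (models w a \<or> models w b)"
| "models w (Imp a b) = (models w a \<longrightarrow> models w b)"
| "models w Top = True"
| "models w Bot = False"

text \<open>W is the set of all worlds (UNIV :: 'v world set), finite when 'v is finite.\<close>
definition S :: "'v form \<Rightarrow> 'v world set" where
  "S \<theta> = {w. models w \<theta>}"

definition is_seq :: "'v world set list \<Rightarrow> bool" where
  "is_seq U \<longleftrightarrow> U \<noteq> [] \<and>
     (\<forall>i<length U. \<forall>j<length U. i \<noteq> j \<longrightarrow> U ! i \<inter> U ! j = {})"

definition rank :: "'v world set list \<Rightarrow> 'v form \<Rightarrow> enat" where
  "rank U \<theta> = (if \<exists>i<length U. U ! i \<inter> S \<theta> \<noteq> {}
     then enat (LEAST i. i < length U \<and> U ! i \<inter> S \<theta> \<noteq> {}) else \<infinity>)"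

definition nmcons :: "'v world set list \<Rightarrow> 'v form \<Rightarrow> 'v form \<Rightarrow> bool" where
  "nmcons U \<theta> \<phi> \<longleftrightarrow> rank U \<theta> < rank U (Conj \<theta> (Neg \<phi>)) \<or> rank U \<theta> = \<infinity>"

definition Upsilon :: "'v world set list set" where
  "Upsilon = {U. is_seq U \<and> (\<Union>(set U) = UNIV \<or> \<Union>(set U) = {})}"

definition preceq :: "'v world set list \<Rightarrow> 'v form \<Rightarrow> 'v form \<Rightarrow> bool" where
  "preceq U \<theta> \<phi> \<longleftrightarrow> \<not> nmcons U (Disj (Neg \<theta>) (Neg \<phi>)) \<theta> \<or> nmcons U (Neg \<phi>) Bot"

definition strict_part :: "('a \<Rightarrow> 'a \<Rightarrow> bool) \<Rightarrow> 'a \<Rightarrow> 'a \<Rightarrow> bool" where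
  "strict_part R x y \<longleftrightarrow> R x y \<and> \<not> R y x"

definition Bel :: "('v form \<Rightarrow> 'v form \<Rightarrow> bool) \<Rightarrow> 'v form set" where
  "Bel R = (if \<exists>\<theta>. strict_part R Bot \<theta> then {\<theta>. strict_part R Bot \<theta>} else UNIV)"

end

theory Submission
  imports Defs
begin

text \<open>Both \<open>\<not>\<bottom> \<or> \<not>\<theta>\<close> and \<open>\<not>\<theta> \<or> \<not>\<bottom>\<close> are equivalent to \<open>\<top>\<close>, and \<open>\<theta> |~ \<bottom>\<close> just says that
  \<open>\<theta>\<close> has rank \<open>\<infinity>\<close>. Unfolding the definitions therefore gives \<open>\<bottom> \<prec> \<theta>\<close> iff \<open>\<top>\<close> has finite
  rank and \<open>\<top> |~ \<theta>\<close>. If \<open>\<top>\<close> has finite rank then \<open>\<bottom> \<prec> \<top>\<close>, so the belief set is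
  \<open>{\<theta>. \<top> |~ \<theta>}\<close>; otherwise nothing lies strictly above \<open>\<bottom>\<close>, the belief set is all of \<open>L\<close>,
  and \<open>\<top> |~ \<theta>\<close> holds vacuously. No property of the sequence is used.\<close>

lemma rank_cong: "S \<theta> = S \<phi> \<Longrightarrow> rank U \<theta> = rank U \<phi>"
  by (simp add: rank_def)

lemma rank_unsatisfiable: "S \<theta> = {} \<Longrightarrow> rank U \<theta> = \<infinity>"
  by (simp add: rank_def)

lemma nmcons_cong:
  assumes "S \<theta> = S \<theta>'" and "S \<phi> = S \<phi>'"
  shows "nmcons U \<theta> \<phi> \<longleftrightarrow> nmcons U \<theta>' \<phi>'"
proof -
  have "S (Conj \<theta> (Neg \<phi>)) = S (Conj \<theta>' (Neg \<phi>'))"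
    using assms by (auto simp: S_def set_eq_iff)
  then show ?thesis
    unfolding nmcons_def using assms by (metis rank_cong)
qed

lemma nmcons_Bot_iff: "nmcons U \<theta> Bot \<longleftrightarrow> rank U \<theta> = \<infinity>"
proof -
  have "rank U (Conj \<theta> (Neg Bot)) = rank U \<theta>"
    by (rule rank_cong) (simp add: S_def)
  then show ?thesis
    by (simp add: nmcons_def)
qed

lemma strict_preceq_Bot_iff:
  "strict_part (preceq U) Bot \<theta> \<longleftrightarrow> rank U Top \<noteq> \<infinity> \<and> nmcons U Top \<theta>"
proof -
  have "preceq U Bot \<theta> \<longleftrightarrow> rank U Top \<noteq> \<infinity> \<or> rank U (Neg \<theta>) = \<infinity>"
    using nmcons_cong[of "Disj (Neg Bot) (Neg \<theta>)" Top Bot Bot U]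
    by (simp add: preceq_def nmcons_Bot_iff S_def)
  moreover have "preceq U \<theta> Bot \<longleftrightarrow> \<not> nmcons U Top \<theta> \<or> rank U Top = \<infinity>"
    using nmcons_cong[of "Disj (Neg \<theta>) (Neg Bot)" Top \<theta> \<theta> U]
      rank_cong[of "Neg Bot" Top U]
    by (simp add: preceq_def nmcons_Bot_iff S_def)
  ultimately show ?thesis
    by (auto simp: strict_part_def)
qed

lemma Bel_preceq: "Bel (preceq U) = {\<theta>. nmcons U Top \<theta>}"
proof (cases "rank U Top = \<infinity>")
  case True
  then show ?thesis
    by (simp add: Bel_def strict_preceq_Bot_iff nmcons_def)
next
  case False
  have "rank U (Conj Top (Neg Top)) = \<infinity>"
    by (rule rank_unsatisfiable) (simp add: S_def)
  with False have "strict_part (preceq U) Bot Top"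
    by (simp add: strict_preceq_Bot_iff nmcons_def)
  then show ?thesis
    unfolding Bel_def by (auto simp: strict_preceq_Bot_iff)
qed

theorem proposition4:
  fixes U :: "('v::finite) world set list" and \<theta> :: "'v form"
  assumes "U \<in> Upsilon"
  shows "\<theta> \<in> Bel (preceq U) \<longleftrightarrow> nmcons U Top \<theta>"
  by (simp add: Bel_preceq)

end
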